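(* There exists a deterministic algorithm for asymmetric streaming pattern matching that, given a text $T$ with $|T|=n$ accessible by value queries and a pattern $P$ with $|P|=m$ arriving as a stream, correctly decides whether $P$ appears as a substring of $T$ using memory $O(1)$ and runtime $O(nm)$.
   Context: Asymmetric streaming pattern matching: a text $T$ over a finite alphabet $\Sigma$ is available via value queries (in each query one gives an index $i$ and receives the $i$-th character of $T$), and a pattern $P$ over $\Sigma$ arrives as a stream of characters, read in order. The goal is to decide whether $P$ appears as a (contiguous) substring of $T$. Memory is measured in machine words (each able to hold an index or a number polynomial in $n$), not counting the read-only access to $T$. *)

theory Defs
  imports Main "HOL-Library.Sublist"
begin

text \<open>A deterministic register machine (word-RAM style) for asymmetric streaming
pattern matching. Characters of the finite alphabet are the naturals below sigma.
Registers hold natural numbers (machine words); a program names only finitely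
many registers, so it uses O(1) words. Instructions:
  Const i c      : r_i := c
  Add/Sub/Mul/Div/Mod i j l : r_i := r_j op r_l   (Sub truncated, x div 0 = 0)
  Query i j      : r_i := T[r_j]   (value query to the text; 0 if out of range)
  Read i         : r_i := 1 + next pattern character, or 0 if the stream has ended
  Jz i l         : if r_i = 0 then jump to l
  Jmp l          : jump to l
  Halt b         : stop with answer b
Each executed instruction costs one time unit.\<close>

datatype instr =
    Const nat nat
  | Add nat nat nat
  | Sub nat nat nat
  | Mul nat nat nat
  | Div nat nat nat
  | Mod nat nat nat
  | Query nat nat
  | Read nat
  | Jz nat nat
  | Jmp nat
  | Halt bool

text \<open>Configuration: program counter, register file, remaining (unread) part of the pattern stream.\<close>
type_synonym conf = "nat \<times> (nat \<Rightarrow> nat) \<times> nat list"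

definition query :: "nat list \<Rightarrow> nat \<Rightarrow> nat" where
  "query T j = (if j < length T then T ! j else 0)"

fun exec_instr :: "nat list \<Rightarrow> instr \<Rightarrow> conf \<Rightarrow> conf" where
  "exec_instr T (Const i c) (pc, r, s) = (Suc pc, r(i := c), s)"
| "exec_instr T (Add i j l) (pc, r, s) = (Suc pc, r(i := r j + r l), s)"
| "exec_instr T (Sub i j l) (pc, r, s) = (Suc pc, r(i := r j - r l), s)"
| "exec_instr T (Mul i j l) (pc, r, s) = (Suc pc, r(i := r j * r l), s)"
| "exec_instr T (Div i j l) (pc, r, s) = (Suc pc, r(i := r j div r l), s)"
| "exec_instr T (Mod i j l) (pc, r, s) = (Suc pc, r(i := r j mod r l), s)"
| "exec_instr T (Query i j) (pc, r, s) = (Suc pc, r(i := query T (r j)), s)"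
| "exec_instr T (Read i) (pc, r, s) =
     (case s of [] \<Rightarrow> (Suc pc, r(i := 0), [])
              | x # xs \<Rightarrow> (Suc pc, r(i := Suc x), xs))"
| "exec_instr T (Jz i l) (pc, r, s) = (if r i = 0 then l else Suc pc, r, s)"
| "exec_instr T (Jmp l) (pc, r, s) = (l, r, s)"
| "exec_instr T (Halt b) c = c"

definition step :: "instr list \<Rightarrow> nat list \<Rightarrow> conf \<Rightarrow> conf" where
  "step prog T c = (if fst c < length prog then exec_instr T (prog ! fst c) c else c)"

definition exec :: "instr list \<Rightarrow> nat list \<Rightarrow> conf \<Rightarrow> nat \<Rightarrow> conf" where
  "exec prog T c t = (step prog T ^^ t) c"

definition init :: "nat \<Rightarrow> nat list \<Rightarrow> conf" where
  "init n P = (0, (\<lambda>_. 0)(0 := n), P)"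

definition halted_with :: "instr list \<Rightarrow> conf \<Rightarrow> bool \<Rightarrow> bool" where
  "halted_with prog c b \<longleftrightarrow> fst c < length prog \<and> prog ! fst c = Halt b"

text \<open>The run on text T and pattern stream P halts within t steps with answer b,
and during these t steps every register value stays below (n+2)^d (words of
polynomial size in n).\<close>
definition run_ok :: "instr list \<Rightarrow> nat list \<Rightarrow> nat list \<Rightarrow> nat \<Rightarrow> nat \<Rightarrow> bool \<Rightarrow> bool" where
  "run_ok prog T P t d b \<longleftrightarrow>
     halted_with prog (exec prog T (init (length T) P) t) b \<and>
     (\<forall>s\<le>t. \<forall>i. fst (snd (exec prog T (init (length T) P) s)) i \<le> (length T + 2) ^ d)"

end

theory Submission
  imports Defs "HOL-Library.Sublist"
begin

(* The pattern is never stored. After reading the prefix w of length k, the machine keeps only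
   the position i of the leftmost occurrence of w in T, so that w = T[i..i+k). When the next
   character c arrives it scans j = i, i+1, ... for the first j with T[j..j+k) = T[i..i+k) and
   T[j+k] = c, comparing characters by value queries. That j is the leftmost occurrence of w c;
   if there is none, P does not occur in T. Testing one candidate costs O(k) steps, and since i
   never decreases, at most n + m candidates are tested during the whole run, which gives time
   O(nm) with a constant number of registers, each holding a value at most n + sigma + 1. *)

definition regs_le :: "nat \<Rightarrow> (nat \<Rightarrow> nat) \<Rightarrow> bool" where
  "regs_le B r \<longleftrightarrow> (\<forall>x. r x \<le> B)"

lemma regs_le_upd [simp]: "regs_le B r \<Longrightarrow> regs_le B (r(x := v)) \<longleftrightarrow> v \<le> B"
  by (auto simp: regs_le_def)

definition reaches_within ::
    "instr list \<Rightarrow> nat list \<Rightarrow> nat \<Rightarrow> nat \<Rightarrow> conf \<Rightarrow> (conf \<Rightarrow> bool) \<Rightarrow> bool" where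
  "reaches_within prog T B X c Q \<longleftrightarrow>
     (\<exists>t\<le>X. Q (exec prog T c t) \<and> (\<forall>u\<le>t. regs_le B (fst (snd (exec prog T c u)))))"

lemma exec_Suc: "exec prog T c (Suc t) = exec prog T (step prog T c) t"
  by (simp add: exec_def funpow_Suc_right del: funpow.simps)

lemma exec_add: "exec prog T c (t + u) = exec prog T (exec prog T c t) u"
  by (simp add: exec_def funpow_add add.commute[of t u])

lemma reaches_within_0 [simp]:
  "reaches_within prog T B 0 c Q \<longleftrightarrow> regs_le B (fst (snd c)) \<and> Q c"
  by (auto simp: reaches_within_def exec_def)

lemma reaches_within_Suc:
  "reaches_within prog T B (Suc X) c Q \<longleftrightarrow>
     regs_le B (fst (snd c)) \<and> (Q c \<or> reaches_within prog T B X (step prog T c) Q)"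
proof -
  have all_le_Suc: "(\<forall>u\<le>Suc t. P u) \<longleftrightarrow> P 0 \<and> (\<forall>u\<le>t. P (Suc u))" for P :: "nat \<Rightarrow> bool" and t
    by (metis Suc_le_mono le0 not0_implies_Suc)
  have ex_le_Suc: "(\<exists>t\<le>Suc X. P t) \<longleftrightarrow> P 0 \<or> (\<exists>t\<le>X. P (Suc t))" for P :: "nat \<Rightarrow> bool"
    by (metis Suc_le_mono le0 not0_implies_Suc)
  show ?thesis
    unfolding reaches_within_def ex_le_Suc all_le_Suc exec_Suc
    by (auto simp: exec_def)
qed

lemma reaches_within_numeral:
  "reaches_within prog T B (numeral n) c Q \<longleftrightarrow>
     regs_le B (fst (snd c)) \<and> (Q c \<or> reaches_within prog T B (pred_numeral n) (step prog T c) Q)"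
  by (subst numeral_eq_Suc) (rule reaches_within_Suc)

lemma reaches_within_mono:
  assumes "reaches_within prog T B X c Q" and "X \<le> Y" and "\<And>c. Q c \<Longrightarrow> R c"
  shows "reaches_within prog T B Y c R"
  using assms unfolding reaches_within_def by (meson order.trans)

lemma reaches_within_trans:
  assumes first: "reaches_within prog T B X c Q"
    and "\<And>pc r s. Q (pc, r, s) \<Longrightarrow> regs_le B r \<Longrightarrow> reaches_within prog T B Y (pc, r, s) R"
  shows "reaches_within prog T B (X + Y) c R"
proof -
  let ?regs = "\<lambda>c t. fst (snd (exec prog T c t))"
  obtain t where t: "t \<le> X" "Q (exec prog T c t)" and bounded: "\<forall>u\<le>t. regs_le B (?regs c u)"
    using first unfolding reaches_within_def by blast
  then have "reaches_within prog T B Y (exec prog T c t) R"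
    using assms(2) by (metis order.refl prod.collapse)
  then obtain t' where t': "t' \<le> Y" "R (exec prog T (exec prog T c t) t')"
    and bounded': "\<forall>u\<le>t'. regs_le B (?regs (exec prog T c t) u)"
    unfolding reaches_within_def by blast
  have "regs_le B (?regs c u)" if "u \<le> t + t'" for u
  proof (cases "u \<le> t")
    case False
    then obtain v where "u = t + v"
      using nat_le_iff_add nat_le_linear by blast
    then show ?thesis using bounded' that by (simp add: exec_add)
  qed (use bounded in simp)
  then show ?thesis
    unfolding reaches_within_def using t t' exec_add by (intro exI[of _ "t + t'"]) auto
qed

definition at_pc :: "nat \<Rightarrow> nat list \<Rightarrow> ((nat \<Rightarrow> nat) \<Rightarrow> bool) \<Rightarrow> conf \<Rightarrow> bool" where
  "at_pc pc s P = (\<lambda>(pc', r, s'). pc' = pc \<and> s' = s \<and> P r)"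

lemma at_pc_conv [simp]: "at_pc pc s P (pc', r, s') \<longleftrightarrow> pc' = pc \<and> s' = s \<and> P r"
  by (simp add: at_pc_def)

lemma reaches_within_seq:
  assumes "reaches_within prog T B X c (at_pc pc s P)"
    and "\<And>r. P r \<Longrightarrow> regs_le B r \<Longrightarrow> reaches_within prog T B Y (pc, r, s) R"
  shows "reaches_within prog T B (X + Y) c R"
  using assms(1) by (rule reaches_within_trans) (use assms(2) in auto)

lemma prefix_iff_take: "prefix xs ys \<longleftrightarrow> take (length xs) ys = xs"
  unfolding prefix_def by (metis append_eq_conv_conj)

lemma prefix_drop_iff_nth:
  "prefix xs (drop j ys) \<longleftrightarrow> length xs \<le> length ys - j \<and> (\<forall>q<length xs. xs ! q = ys ! (j + q))"
proof -
  have "prefix xs (drop j ys) \<longleftrightarrow> take (length xs) (drop j ys) = xs"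
    by (rule prefix_iff_take)
  also have "\<dots> \<longleftrightarrow> length xs \<le> length ys - j \<and> (\<forall>q<length xs. xs ! q = ys ! (j + q))"
    by (auto simp: list_eq_iff_nth_eq)
  finally show ?thesis .
qed

lemma prefix_window_snoc_iff:
  assumes "i + k \<le> length ys"
  shows "prefix (take k (drop i ys) @ [c]) (drop j ys) \<longleftrightarrow>
           j + k < length ys \<and> ys ! (j + k) = c \<and> (\<forall>q<k. ys ! (i + q) = ys ! (j + q))"
  using assms by (auto simp: prefix_drop_iff_nth nth_append less_Suc_eq)

lemma sublist_iff_prefix_drop: "sublist xs ys \<longleftrightarrow> (\<exists>j. prefix xs (drop j ys))"
proof
  assume "sublist xs ys"
  then obtain ps ss where "ys = ps @ xs @ ss" by (auto simp: sublist_def)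
  then show "\<exists>j. prefix xs (drop j ys)" by (intro exI[of _ "length ps"]) simp
next
  assume "\<exists>j. prefix xs (drop j ys)"
  then obtain j where "prefix xs (drop j ys)" ..
  then show "sublist xs ys"
    by (rule sublist_order.order.trans[OF prefix_imp_sublist sublist_drop])
qed

lemma leftmost_extensionE:
  fixes ys :: "'a list" and i k :: nat
  defines "w \<equiv> take k (drop i ys)"
  assumes "i + k \<le> length ys" and "\<forall>j<i. \<not> prefix w (drop j ys)"
    and "\<exists>L\<ge>i. prefix (w @ [x]) (drop L ys)"
  obtains L where "i \<le> L" "prefix (w @ [x]) (drop L ys)"
    "\<forall>j\<in>{i..<L}. \<not> prefix (w @ [x]) (drop j ys)"
    "take (Suc k) (drop L ys) = w @ [x]"
    "\<forall>j<L. \<not> prefix (take (Suc k) (drop L ys)) (drop j ys)"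
proof -
  obtain L where L: "i \<le> L" "prefix (w @ [x]) (drop L ys)"
    and before: "\<forall>j<L. \<not> (i \<le> j \<and> prefix (w @ [x]) (drop j ys))"
    using assms(4) exists_least_iff[of "\<lambda>L. i \<le> L \<and> prefix (w @ [x]) (drop L ys)"] by blast
  have window: "take (Suc k) (drop L ys) = w @ [x]"
    using L(2) assms(2) prefix_iff_take[of "w @ [x]"] unfolding w_def by simp
  have "\<forall>j<L. \<not> prefix (w @ [x]) (drop j ys)"
    using assms(3) before append_prefixD not_le by metis
  with L before window show thesis
    using that by auto
qed

lemma not_sublist_if_no_snoc_occurrence:
  assumes "\<forall>j<i. \<not> prefix w (drop j ys)" and "\<forall>j\<ge>i. \<not> prefix (w @ [x]) (drop j ys)"
  shows "\<not> sublist (w @ x # zs) ys"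
proof
  assume "sublist (w @ x # zs) ys"
  then obtain j where "prefix ((w @ [x]) @ zs) (drop j ys)"
    unfolding sublist_iff_prefix_drop by auto
  then have "prefix (w @ [x]) (drop j ys)" by (rule append_prefixD)
  then show False
    using assms append_prefixD not_le by metis
qed

lemma phase_cost_le:
  fixes n :: nat
  assumes "i \<le> L" "L + k < n" "k < a"
  shows "13 * (k + 1) * (L - i + 1) + 7 + 20 * a * (2 * n - 2 * L - Suc k + 2)
           \<le> 20 * a * (2 * n - 2 * i - k + 2)"
proof -
  obtain D where L: "L = i + D"
    using assms(1) le_Suc_ex by blast
  obtain e where n: "n = L + k + 1 + e"
    using assms(2) less_iff_Suc_add by auto
  have "(k + 1) * (D + 1) \<le> a * (2 * D + 1)"
    using assms(3) by (intro mult_mono) auto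
  moreover have "1 \<le> a * (2 * D + 1)"
    using assms(3) by simp
  ultimately have "13 * (k + 1) * (D + 1) + 7 \<le> 20 * a * (2 * D + 1)"
    by linarith
  then show ?thesis
    unfolding n L by (simp add: algebra_simps)
qed

lemma reject_cost_le:
  fixes n :: nat
  assumes "i + k \<le> n" "k < a"
  shows "13 * (k + 1) * (n - (i + k)) + 7 \<le> 20 * a * (2 * n - 2 * i - k + 2)"
proof -
  obtain e where n: "n = i + k + e"
    using assms(1) le_Suc_ex by blast
  have "(k + 1) * e \<le> a * e"
    using assms(2) by (intro mult_right_mono) auto
  moreover have "1 \<le> a"
    using assms(2) by simp
  ultimately have "13 * (k + 1) * e + 7 \<le> 20 * a * (2 * e + k + 2)"
    by (simp add: algebra_simps)
  then show ?thesis
    unfolding n by (simp add: algebra_simps)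
qed

(* Registers: 0 holds n, 1 holds i, 2 holds k, 3 the current character c, 4 the candidate j,
   5 the comparison offset p, 6 the constant 1; 7 to 11 are scratch. Blocks start at pc 1 (read c,
   j := i), 5 (stop with False if j + k = n, else test T[j+k] = c), 13 (j := j + 1),
   15 (p := 0), 16 (compare T[i+p] with T[j+p] while p < k, back to 13 on a mismatch),
   29 (i := j, k := k + 1) and 32/33 (halt).
   Equality x = y is tested as (x - y) + (y - x) = 0. *)
definition match_prog :: "instr list" where
  "match_prog =
    [Const 6 1,
     Read 3, Jz 3 32, Sub 3 3 6, Mul 4 1 6,
     Add 7 4 2, Sub 8 0 7, Jz 8 33, Query 8 7, Sub 9 8 3, Sub 10 3 8, Add 9 9 10, Jz 9 15,
     Add 4 4 6, Jmp 5,
     Const 5 0,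
     Sub 8 2 5, Jz 8 29, Add 7 1 5, Query 8 7, Add 7 4 5, Query 9 7,
       Sub 10 8 9, Sub 11 9 8, Add 10 10 11, Jz 10 27, Jmp 13,
     Add 5 5 6, Jmp 16,
     Mul 1 4 6, Add 2 2 6, Jmp 1,
     Halt True, Halt False]"

definition outer_regs :: "nat list \<Rightarrow> (nat \<Rightarrow> nat) \<Rightarrow> nat \<Rightarrow> nat \<Rightarrow> bool" where
  "outer_regs T r i k \<longleftrightarrow> r 0 = length T \<and> r 1 = i \<and> r 2 = k \<and> r 6 = 1"

definition scan_regs ::
    "nat list \<Rightarrow> (nat \<Rightarrow> nat) \<Rightarrow> nat \<Rightarrow> nat \<Rightarrow> nat \<Rightarrow> nat \<Rightarrow> bool" where
  "scan_regs T r i k c j \<longleftrightarrow> outer_regs T r i k \<and> r 3 = c \<and> r 4 = j"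

context
  fixes T :: "nat list" and \<sigma> B :: nat
  assumes alphabet: "set T \<subseteq> {..<\<sigma>}" and word_bound: "length T + \<sigma> < B"
begin

abbreviation "reaches \<equiv> reaches_within match_prog T B"

lemma nth_less_alphabet: "x < length T \<Longrightarrow> T ! x < \<sigma>"
  using alphabet nth_mem by blast

lemma le_length_le_bound: "x \<le> length T \<Longrightarrow> x \<le> B"
  using word_bound by linarith

lemma less_alphabet_le_bound: "a < \<sigma> \<Longrightarrow> a \<le> B"
  using word_bound by linarith

lemma Suc_less_alphabet_le_bound: "a < \<sigma> \<Longrightarrow> Suc a \<le> B"
  using word_bound by linarith

lemma diff_le_bound: "a \<le> B \<Longrightarrow> a - b \<le> B"
  by linarith

lemma char_dist_le_bound: "a < \<sigma> \<Longrightarrow> b < \<sigma> \<Longrightarrow> a - b + (b - a) \<le> B"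
  using word_bound by linarith

(* Straight-line code is executed symbolically by the simplifier: execute_simps unfolds one
   machine step per unit of the budget, bound_simps discharges the register bounds. *)
lemmas execute_simps = reaches_within_Suc reaches_within_numeral step_def match_prog_def
  scan_regs_def outer_regs_def query_def

lemmas bound_simps = nth_less_alphabet le_length_le_bound less_alphabet_le_bound
  Suc_less_alphabet_le_bound diff_le_bound char_dist_le_bound

lemma read_step:
  assumes "outer_regs T r i k" "regs_le B r" "i \<le> length T" "x < \<sigma>"
  shows "reaches 4 (1, r, x # s) (at_pc 5 s (\<lambda>r'. scan_regs T r' i k x i))"
  using assms by (simp add: execute_simps bound_simps)

lemma stream_end:
  assumes "outer_regs T r i k" "regs_le B r"
  shows "reaches 2 (1, r, []) (\<lambda>c. halted_with match_prog c True)"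
  using assms by (simp add: execute_simps halted_with_def)

lemma scan_exhausted:
  assumes "scan_regs T r i k c j" "regs_le B r" "j + k = length T"
  shows "reaches 3 (5, r, s) (\<lambda>c. halted_with match_prog c False)"
  using assms by (simp add: execute_simps bound_simps halted_with_def)

lemma scan_head_mismatch:
  assumes "scan_regs T r i k c j" "regs_le B r" "c < \<sigma>" "j + k < length T" "T ! (j + k) \<noteq> c"
  shows "reaches 10 (5, r, s) (at_pc 5 s (\<lambda>r'. scan_regs T r' i k c (Suc j)))"
  using assms by (simp add: execute_simps bound_simps)

lemma scan_head_match:
  assumes "scan_regs T r i k c j" "regs_le B r" "c < \<sigma>" "j + k < length T" "T ! (j + k) = c"
  shows "reaches 9 (5, r, s) (at_pc 16 s (\<lambda>r'. scan_regs T r' i k c j \<and> r' 5 = 0))"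
  using assms by (simp add: execute_simps bound_simps)

lemma compare_step_match:
  assumes "scan_regs T r i k c j" "r 5 = p" "regs_le B r" "p < k"
    and "i + k \<le> length T" "j + k < length T" "T ! (i + p) = T ! (j + p)"
  shows "reaches 12 (16, r, s) (at_pc 16 s (\<lambda>r'. scan_regs T r' i k c j \<and> r' 5 = Suc p))"
  using assms by (simp add: execute_simps bound_simps)

lemma compare_step_mismatch:
  assumes "scan_regs T r i k c j" "r 5 = p" "regs_le B r" "p < k"
    and "i + k \<le> length T" "j + k < length T" "T ! (i + p) \<noteq> T ! (j + p)"
  shows "reaches 11 (16, r, s) (at_pc 13 s (\<lambda>r'. scan_regs T r' i k c j))"
  using assms by (simp add: execute_simps bound_simps)

lemma compare_done:
  assumes "scan_regs T r i k c j" "r 5 = k" "regs_le B r"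
  shows "reaches 2 (16, r, s) (at_pc 29 s (\<lambda>r'. scan_regs T r' i k c j))"
  using assms by (simp add: execute_simps)

lemma candidate_advance:
  assumes "scan_regs T r i k c j" "regs_le B r" "j < length T"
  shows "reaches 2 (13, r, s) (at_pc 5 s (\<lambda>r'. scan_regs T r' i k c (Suc j)))"
  using assms by (simp add: execute_simps bound_simps)

lemma window_advance:
  assumes "scan_regs T r i k c L" "regs_le B r" "L + k < length T"
  shows "reaches 3 (29, r, s) (at_pc 1 s (\<lambda>r'. outer_regs T r' L (Suc k)))"
  using assms by (simp add: execute_simps bound_simps)

lemma compare_loop:
  assumes "scan_regs T r i k c j" "r 5 = p" "regs_le B r"
    and "p \<le> k" "i + k \<le> length T" "j + k < length T"
  shows "reaches (13 * (k - p) + 2) (16, r, s)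
           (at_pc (if \<forall>q\<in>{p..<k}. T ! (i + q) = T ! (j + q) then 29 else 13) s
              (\<lambda>r'. scan_regs T r' i k c j))"
  using assms
proof (induction "k - p" arbitrary: p r)
  case 0
  then show ?case using compare_done[of r i k c j s] by (simp add: numeral_2_eq_2)
next
  case (Suc d p r)
  have "p < k" using Suc.hyps by linarith
  show ?case
  proof (cases "T ! (i + p) = T ! (j + p)")
    case True
    then have agree_from_Suc: "(\<forall>q\<in>{Suc p..<k}. T ! (i + q) = T ! (j + q)) \<longleftrightarrow>
        (\<forall>q\<in>{p..<k}. T ! (i + q) = T ! (j + q))"
      using atLeastLessThan_iff Suc_le_eq le_eq_less_or_eq by metis
    have "reaches (12 + (13 * (k - Suc p) + 2)) (16, r, s)
        (at_pc (if \<forall>q\<in>{Suc p..<k}. T ! (i + q) = T ! (j + q) then 29 else 13) s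
           (\<lambda>r'. scan_regs T r' i k c j))"
      using compare_step_match[OF Suc.prems(1-3) \<open>p < k\<close> Suc.prems(5,6) True]
    proof (rule reaches_within_seq)
      fix r' assume "scan_regs T r' i k c j \<and> r' 5 = Suc p" "regs_le B r'"
      then show "reaches (13 * (k - Suc p) + 2) (16, r', s)
          (at_pc (if \<forall>q\<in>{Suc p..<k}. T ! (i + q) = T ! (j + q) then 29 else 13) s
             (\<lambda>r'. scan_regs T r' i k c j))"
        using Suc.hyps(2) Suc.prems(5,6) \<open>p < k\<close> by (intro Suc.hyps(1)) auto
    qed
    then show ?thesis
      unfolding agree_from_Suc by (rule reaches_within_mono) (use \<open>p < k\<close> in auto)
  next
    case False
    then have disagree: "\<not> (\<forall>q\<in>{p..<k}. T ! (i + q) = T ! (j + q))"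
      using \<open>p < k\<close> by auto
    show ?thesis
      by (rule reaches_within_mono[OF compare_step_mismatch[OF Suc.prems(1-3) \<open>p < k\<close> Suc.prems(5,6) False]])
        (use disagree \<open>p < k\<close> in auto)
  qed
qed

lemma scan_step:
  assumes "scan_regs T r i k c j" "regs_le B r" "c < \<sigma>" "i + k \<le> length T" "j + k < length T"
  shows "reaches (13 * (k + 1)) (5, r, s)
           (if prefix (take k (drop i T) @ [c]) (drop j T)
            then at_pc 29 s (\<lambda>r'. scan_regs T r' i k c j)
            else at_pc 5 s (\<lambda>r'. scan_regs T r' i k c (Suc j)))"
proof -
  let ?agree = "\<forall>q\<in>{0..<k}. T ! (i + q) = T ! (j + q)"
  have occurs_iff: "prefix (take k (drop i T) @ [c]) (drop j T) \<longleftrightarrow> T ! (j + k) = c \<and> ?agree"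
    using prefix_window_snoc_iff[OF assms(4)] assms(5) by auto
  show ?thesis
  proof (cases "T ! (j + k) = c")
    case False
    show ?thesis
      by (rule reaches_within_mono[OF scan_head_mismatch[OF assms(1-3,5) False]])
        (use occurs_iff False in auto)
  next
    case True
    have compared: "reaches (9 + (13 * (k - 0) + 2)) (5, r, s)
        (at_pc (if ?agree then 29 else 13) s (\<lambda>r'. scan_regs T r' i k c j))"
      using scan_head_match[OF assms(1-3,5) True]
      by (rule reaches_within_seq) (use compare_loop[of _ i k c j 0 s] assms in auto)
    show ?thesis
    proof (cases ?agree)
      case True
      show ?thesis
        by (rule reaches_within_mono[OF compared]) (use occurs_iff True \<open>T ! (j + k) = c\<close> in auto)
    next
      case False
      from compared have "reaches (9 + (13 * (k - 0) + 2) + 2) (5, r, s)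
          (at_pc 5 s (\<lambda>r'. scan_regs T r' i k c (Suc j)))"
        unfolding if_not_P[OF False]
        by (rule reaches_within_seq) (use candidate_advance assms(5) in auto)
      then show ?thesis
        by (rule reaches_within_mono) (use occurs_iff False in auto)
    qed
  qed
qed

lemma scan_finds:
  assumes "scan_regs T r i k c j" "regs_le B r" "c < \<sigma>" "i + k \<le> length T" "j \<le> L"
    and "prefix (take k (drop i T) @ [c]) (drop L T)"
    and "\<forall>j'\<in>{j..<L}. \<not> prefix (take k (drop i T) @ [c]) (drop j' T)"
  shows "reaches (13 * (k + 1) * (L - j + 1)) (5, r, s) (at_pc 29 s (\<lambda>r'. scan_regs T r' i k c L))"
  using assms
proof (induction "L - j" arbitrary: j r)
  case 0
  then have "j = L" "j + k < length T"
    using prefix_window_snoc_iff[of i k T c L] by auto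
  then show ?case
    using scan_step[OF "0.prems"(1-4) \<open>j + k < length T\<close>] "0.prems"(6) by simp
next
  case (Suc d j r)
  have "j < L" "j + k < length T"
    using Suc.hyps(2) Suc.prems(4,6) prefix_window_snoc_iff[of i k T c L] by auto
  with Suc.prems(7) have "reaches (13 * (k + 1)) (5, r, s) (at_pc 5 s (\<lambda>r'. scan_regs T r' i k c (Suc j)))"
    using scan_step[OF Suc.prems(1-4) \<open>j + k < length T\<close>] by simp
  then have "reaches (13 * (k + 1) + 13 * (k + 1) * (L - Suc j + 1)) (5, r, s)
      (at_pc 29 s (\<lambda>r'. scan_regs T r' i k c L))"
    by (rule reaches_within_seq) (use Suc.hyps Suc.prems \<open>j < L\<close> in auto)
  moreover have "L - j = Suc d" "L - Suc j = d"
    using Suc.hyps(2) by simp_all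
  ultimately show ?case by (simp add: algebra_simps)
qed

lemma scan_fails:
  assumes "scan_regs T r i k c j" "regs_le B r" "c < \<sigma>" "i + k \<le> length T" "j + k \<le> length T"
    and "\<forall>j'\<ge>j. \<not> prefix (take k (drop i T) @ [c]) (drop j' T)"
  shows "reaches (13 * (k + 1) * (length T - (j + k)) + 3) (5, r, s)
           (\<lambda>c. halted_with match_prog c False)"
  using assms
proof (induction "length T - (j + k)" arbitrary: j r)
  case 0
  then show ?case using scan_exhausted[of r i k c j s] by simp
next
  case (Suc d j r)
  have "j + k < length T" using Suc.hyps(2) by linarith
  with Suc.prems(6) have "reaches (13 * (k + 1)) (5, r, s) (at_pc 5 s (\<lambda>r'. scan_regs T r' i k c (Suc j)))"
    using scan_step[OF Suc.prems(1-4) \<open>j + k < length T\<close>] by simp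
  then have "reaches (13 * (k + 1) + (13 * (k + 1) * (length T - (Suc j + k)) + 3)) (5, r, s)
      (\<lambda>c. halted_with match_prog c False)"
    by (rule reaches_within_seq) (use Suc.hyps(1)[of "Suc j"] Suc.hyps(2) Suc.prems in auto)
  moreover have "length T - (j + k) = Suc d" "length T - Suc (j + k) = d"
    using Suc.hyps(2) by simp_all
  ultimately show ?case by (simp add: algebra_simps)
qed

lemma phase_extends:
  assumes "outer_regs T r i k" "regs_le B r" "x < \<sigma>" "i + k \<le> length T" "i \<le> L"
    and "prefix (take k (drop i T) @ [x]) (drop L T)"
    and "\<forall>j\<in>{i..<L}. \<not> prefix (take k (drop i T) @ [x]) (drop j T)"
  shows "reaches (4 + 13 * (k + 1) * (L - i + 1) + 3) (1, r, x # s)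
           (at_pc 1 s (\<lambda>r'. outer_regs T r' L (Suc k)))"
proof -
  have "L + k < length T"
    using prefix_window_snoc_iff[OF assms(4)] assms(6) by simp
  have "reaches (4 + 13 * (k + 1) * (L - i + 1)) (1, r, x # s)
      (at_pc 29 s (\<lambda>r'. scan_regs T r' i k x L))"
    by (rule reaches_within_seq[OF read_step[OF assms(1,2) _ assms(3)]])
      (use scan_finds[OF _ _ assms(3-7)] assms(4) in auto)
  then show ?thesis
    by (rule reaches_within_seq) (use window_advance \<open>L + k < length T\<close> in auto)
qed

lemma phase_rejects:
  assumes "outer_regs T r i k" "regs_le B r" "x < \<sigma>" "i + k \<le> length T"
    and "\<forall>j\<ge>i. \<not> prefix (take k (drop i T) @ [x]) (drop j T)"
  shows "reaches (4 + (13 * (k + 1) * (length T - (i + k)) + 3)) (1, r, x # s)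
           (\<lambda>c. halted_with match_prog c False)"
  by (rule reaches_within_seq[OF read_step[OF assms(1,2) _ assms(3)]])
    (use scan_fails[OF _ _ assms(3,4,4,5)] assms(4) in auto)

(* The budget is a potential: a phase that moves i to L costs at most 13 (k + 1) (L - i + 1) + 7
   steps and lowers 2 n - 2 i - k by 2 (L - i) + 1. *)
lemma main_loop:
  assumes "outer_regs T r i k" "regs_le B r" "i + k \<le> length T"
    and "P = take k (drop i T) @ s" "set s \<subseteq> {..<\<sigma>}"
    and "\<forall>j<i. \<not> prefix (take k (drop i T)) (drop j T)"
  shows "reaches (20 * (length P + 1) * (2 * length T - 2 * i - k + 2)) (1, r, s)
           (\<lambda>c. halted_with match_prog c (sublist P T))"
  using assms
proof (induction s arbitrary: i k r)
  case Nil
  have "sublist P T"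
    unfolding Nil.prems(4) using sublist_order.order.trans[OF sublist_take sublist_drop] by simp
  show ?case
    by (rule reaches_within_mono[OF stream_end[OF Nil.prems(1,2)]]) (use \<open>sublist P T\<close> in auto)
next
  case (Cons x s i k r)
  let ?w = "take k (drop i T)"
  have "x < \<sigma>" "set s \<subseteq> {..<\<sigma>}"
    using Cons.prems(5) by auto
  have "k < length P + 1"
    using Cons.prems(3,4) by simp
  show ?case
  proof (cases "\<exists>L\<ge>i. prefix (?w @ [x]) (drop L T)")
    case True
    then obtain L where L: "i \<le> L" "prefix (?w @ [x]) (drop L T)"
      and gap: "\<forall>j\<in>{i..<L}. \<not> prefix (?w @ [x]) (drop j T)"
      and window: "take (Suc k) (drop L T) = ?w @ [x]"
      and leftmost: "\<forall>j<L. \<not> prefix (take (Suc k) (drop L T)) (drop j T)"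
      using leftmost_extensionE[OF Cons.prems(3,6)] by blast
    have "L + k < length T"
      using prefix_window_snoc_iff[OF Cons.prems(3)] L(2) by simp
    have "reaches (4 + 13 * (k + 1) * (L - i + 1) + 3 +
        20 * (length P + 1) * (2 * length T - 2 * L - Suc k + 2)) (1, r, x # s)
        (\<lambda>c. halted_with match_prog c (sublist P T))"
    proof (rule reaches_within_seq[OF phase_extends[OF Cons.prems(1,2) \<open>x < \<sigma>\<close> Cons.prems(3) L gap]])
      fix r' assume "outer_regs T r' L (Suc k)" "regs_le B r'"
      then show "reaches (20 * (length P + 1) * (2 * length T - 2 * L - Suc k + 2)) (1, r', s)
          (\<lambda>c. halted_with match_prog c (sublist P T))"
        using \<open>L + k < length T\<close> Cons.prems(4) window \<open>set s \<subseteq> {..<\<sigma>}\<close> leftmost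
        by (intro Cons.IH) auto
    qed
    then show ?thesis
      by (rule reaches_within_mono)
        (use phase_cost_le[OF L(1) \<open>L + k < length T\<close> \<open>k < length P + 1\<close>] in auto)
  next
    case False
    then have "\<not> sublist P T"
      using not_sublist_if_no_snoc_occurrence[OF Cons.prems(6)] Cons.prems(4) by auto
    show ?thesis
      by (rule reaches_within_mono[OF phase_rejects[OF Cons.prems(1,2) \<open>x < \<sigma>\<close> Cons.prems(3)]])
        (use False \<open>\<not> sublist P T\<close> reject_cost_le[OF Cons.prems(3) \<open>k < length P + 1\<close>] in auto)
  qed
qed

end

lemma match_prog_decides_sublist:
  assumes "set T \<subseteq> {..<\<sigma>}" "set P \<subseteq> {..<\<sigma>}"
  shows "reaches_within match_prog T (length T + \<sigma> + 1) (41 * (length T + 1) * (length P + 1))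
           (init (length T) P) (\<lambda>c. halted_with match_prog c (sublist P T))"
proof -
  let ?B = "length T + \<sigma> + 1" and ?r = "((\<lambda>_. 0)(0 := length T))(6 := 1)"
  have start: "reaches_within match_prog T ?B 1 (init (length T) P) (at_pc 1 P (\<lambda>r. r = ?r))"
    by (simp add: init_def reaches_within_Suc step_def match_prog_def regs_le_def)
  have "reaches_within match_prog T ?B (20 * (length P + 1) * (2 * length T - 2 * 0 - 0 + 2))
      (1, ?r, P) (\<lambda>c. halted_with match_prog c (sublist P T))"
    by (rule main_loop[OF assms(1)]) (use assms(2) in \<open>auto simp: outer_regs_def regs_le_def\<close>)
  then have "reaches_within match_prog T ?B (1 + 20 * (length P + 1) * (2 * length T - 2 * 0 - 0 + 2))
      (init (length T) P) (\<lambda>c. halted_with match_prog c (sublist P T))"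
    by (intro reaches_within_seq[OF start]) simp
  then show ?thesis
    by (rule reaches_within_mono) (auto simp: algebra_simps)
qed

lemma run_ok_if_reaches_within:
  assumes "reaches_within prog T B X (init (length T) P) (\<lambda>c. halted_with prog c b)"
    and "B \<le> (length T + 2) ^ d"
  shows "\<exists>t\<le>X. run_ok prog T P t d b"
  using assms unfolding reaches_within_def run_ok_def regs_le_def by (meson order.trans)

lemma add_le_power: "n + \<sigma> + 1 \<le> (n + 2) ^ (\<sigma> + 1)" for n \<sigma> :: nat
proof -
  have "\<sigma> + 1 \<le> (n + 2) ^ \<sigma>"
    using less_exp[of \<sigma>] power_mono[of 2 "n + 2" \<sigma>] by linarith
  have "n + \<sigma> + 1 \<le> (n + 2) * (\<sigma> + 1)"
    by (simp add: algebra_simps)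
  also have "\<dots> \<le> (n + 2) * (n + 2) ^ \<sigma>"
    using \<open>\<sigma> + 1 \<le> (n + 2) ^ \<sigma>\<close> by (rule mult_le_mono2)
  also have "\<dots> = (n + 2) ^ (\<sigma> + 1)"
    by simp
  finally show ?thesis .
qed

theorem corollary1:
  fixes \<sigma> :: nat
  shows "\<exists>(prog :: instr list) (C :: nat) (d :: nat).
           \<forall>T P :: nat list. set T \<subseteq> {..<\<sigma>} \<and> set P \<subseteq> {..<\<sigma>} \<longrightarrow>
             (\<exists>t \<le> C * (length T + 1) * (length P + 1). run_ok prog T P t d (sublist P T))"
proof -
  have "\<forall>T P :: nat list. set T \<subseteq> {..<\<sigma>} \<and> set P \<subseteq> {..<\<sigma>} \<longrightarrow>
      (\<exists>t \<le> 41 * (length T + 1) * (length P + 1). run_ok match_prog T P t (\<sigma> + 1) (sublist P T))"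
    using match_prog_decides_sublist run_ok_if_reaches_within add_le_power by blast
  then show ?thesis by blast
qed

end
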